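(* If $X$ is an (infinite) $T_1$-space, then $\psi(X)\le nu(X)\cdot 2^{s(X)}$.
   Context: A non-empty subset $A$ of a space $X$ is called finitely non-Urysohn if for every non-empty finite subset $F\subseteq A$ and every family $\{U_x:x\in F\}$ where each $U_x$ is an open neighborhood of $x$, we have $\bigcap_{x\in F}\overline{U_x}\neq\emptyset$. The non-Urysohn number is $nu(X):=1+\sup\{|A|:A\subseteq X$ finitely non-Urysohn$\}$. $s(X)$ denotes the spread of $X$ (supremum of cardinalities of discrete subspaces, plus $\omega$) and $\psi(X)$ the pseudocharacter. Throughout, "space" means infinite topological space. *)

theory Defs
  imports "HOL-Analysis.Analysis"
begin

definition finitely_non_urysohn :: "'a topology \<Rightarrow> 'a set \<Rightarrow> bool" where
  "finitely_non_urysohn X A \<longleftrightarrow> A \<noteq> {} \<and> A \<subseteq> topspace X \<and>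
     (\<forall>F U. finite F \<and> F \<noteq> {} \<and> F \<subseteq> A \<and> (\<forall>x\<in>F. openin X (U x) \<and> x \<in> U x)
        \<longrightarrow> (\<Inter>x\<in>F. X closure_of (U x)) \<noteq> {})"

definition discrete_subspace :: "'a topology \<Rightarrow> 'a set \<Rightarrow> bool" where
  "discrete_subspace X D \<longleftrightarrow> D \<subseteq> topspace X \<and> subtopology X D = discrete_topology D"

text \<open>nu(X) = 1 + sup{|A| : A finitely non-Urysohn} is <= nu\<close>
definition nu_le :: "'a topology \<Rightarrow> 'b rel \<Rightarrow> bool" where
  "nu_le X \<nu> \<longleftrightarrow> (\<forall>A. finitely_non_urysohn X A \<longrightarrow> (BNF_Cardinal_Arithmetic.csum BNF_Cardinal_Arithmetic.cone (card_of A), \<nu>) \<in> ordLeq)"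

text \<open>s(X) = sup{|D| : D discrete subspace} + omega is <= sigma\<close>
definition spread_le :: "'a topology \<Rightarrow> 'b rel \<Rightarrow> bool" where
  "spread_le X \<sigma> \<longleftrightarrow> (natLeq, \<sigma>) \<in> ordLeq \<and> (\<forall>D. discrete_subspace X D \<longrightarrow> (card_of D, \<sigma>) \<in> ordLeq)"

text \<open>psi(X) = sup over points x of the least cardinality of a family of open sets
  whose intersection is {x} (plus omega) is <= kappa\<close>
definition psi_le :: "'a topology \<Rightarrow> 'b rel \<Rightarrow> bool" where
  "psi_le X \<kappa> \<longleftrightarrow> (natLeq, \<kappa>) \<in> ordLeq \<and>
     (\<forall>x\<in>topspace X. \<exists>\<U>. (\<forall>U\<in>\<U>. openin X U) \<and> topspace X \<inter> \<Inter>\<U> = {x} \<and> (card_of \<U>, \<kappa>) \<in> ordLeq)"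

end

theory Submission
  imports Defs
begin

text \<open>Fix a point p and let H be the set of points that cannot be separated from p by disjoint
  open sets. Every closed neighbourhood of a point of H contains p, so H is finitely non-Urysohn
  and |H| \<le> nu(X). Every other point z has an open neighbourhood W z whose closure misses p.
  By a Shapirovskii-type argument there is a discrete set A of such points with
  X - H \<subseteq> cl A \<union> \<Union>{W a : a \<in> A}; then {p} is the intersection of the open sets X - {h}
  (h \<in> H - {p}), X - cl (W a) (a \<in> A) and X - cl S (S \<subseteq> A, p \<notin> cl S), a family of size
  at most |H| + |A| + 2^|A| \<le> nu(X) \<cdot> 2^s(X).\<close>

unbundle cardinal_syntax

lemma discrete_subspace_iff_isolated:
  "discrete_subspace X A \<longleftrightarrow> A \<subseteq> topspace X \<and> (\<forall>a\<in>A. \<exists>G. openin X G \<and> G \<inter> A = {a})"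
proof
  assume disc: "discrete_subspace X A"
  have "\<exists>G. openin X G \<and> G \<inter> A = {a}" if "a \<in> A" for a
  proof -
    have "openin (subtopology X A) {a}"
      using disc that unfolding discrete_subspace_def by simp
    then show ?thesis
      unfolding openin_subtopology by blast
  qed
  moreover have "A \<subseteq> topspace X"
    using disc unfolding discrete_subspace_def by simp
  ultimately show "A \<subseteq> topspace X \<and> (\<forall>a\<in>A. \<exists>G. openin X G \<and> G \<inter> A = {a})"
    by blast
next
  assume isol: "A \<subseteq> topspace X \<and> (\<forall>a\<in>A. \<exists>G. openin X G \<and> G \<inter> A = {a})"
  have "openin (subtopology X A) {a}" if a: "a \<in> A" for a
  proof -
    obtain G where "openin X G" "G \<inter> A = {a}"
      using isol a by blast
    then show ?thesis
      unfolding openin_subtopology by blast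
  qed
  then have "discrete_topology A = subtopology X A"
    using conjunct1[OF isol] unfolding discrete_topology_unique by (simp add: Int_absorb1)
  then show "discrete_subspace X A"
    using conjunct1[OF isol] unfolding discrete_subspace_def by simp
qed

lemma discrete_subspace_insert:
  assumes "t1_space X" and "discrete_subspace X A" and z: "z \<in> topspace X - X closure_of A"
  shows "discrete_subspace X (insert z A)"
proof -
  have A: "A \<subseteq> topspace X" "\<And>a. a \<in> A \<Longrightarrow> \<exists>G. openin X G \<and> G \<inter> A = {a}"
    using assms(2) unfolding discrete_subspace_iff_isolated by auto
  have "\<exists>G. openin X G \<and> G \<inter> insert z A = {x}" if x: "x \<in> insert z A" for x
  proof (cases "x = z")
    case True
    have "A \<subseteq> X closure_of A"
      using A(1) closure_of_subset by blast
    then have "(topspace X - X closure_of A) \<inter> insert z A = {z}"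
      using z by blast
    moreover have "openin X (topspace X - X closure_of A)"
      by (simp add: openin_diff)
    ultimately show ?thesis
      using True by blast
  next
    case False
    then obtain G where G: "openin X G" "G \<inter> A = {x}"
      using x A(2) by blast
    have "openin X (G - {z})"
      using G(1) assms(1) unfolding t1_space_openin_delete_alt by blast
    moreover have "(G - {z}) \<inter> insert z A = {x}"
      using G False by auto
    ultimately show ?thesis by blast
  qed
  then show ?thesis
    using A(1) z unfolding discrete_subspace_iff_isolated by blast
qed

definition extends_avoiding :: "('a \<Rightarrow> 'a set) \<Rightarrow> 'a set \<Rightarrow> 'a set \<Rightarrow> bool" where
  "extends_avoiding W A B \<longleftrightarrow> A \<subseteq> B \<and> (\<forall>b\<in>B - A. \<forall>a\<in>A. b \<notin> W a)"

lemma discrete_subspace_Union_chain: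
  assumes disc: "\<And>A. A \<in> C \<Longrightarrow> discrete_subspace X A"
    and chain: "\<And>A B. A \<in> C \<Longrightarrow> B \<in> C \<Longrightarrow> extends_avoiding W A B \<or> extends_avoiding W B A"
    and W: "\<And>x. x \<in> \<Union>C \<Longrightarrow> openin X (W x) \<and> x \<in> W x"
  shows "discrete_subspace X (\<Union>C)"
  unfolding discrete_subspace_iff_isolated
proof (intro conjI ballI)
  show "\<Union>C \<subseteq> topspace X"
    using disc unfolding discrete_subspace_def by blast
  fix x assume "x \<in> \<Union>C"
  then obtain A where A: "A \<in> C" "x \<in> A" by blast
  then obtain G where G: "openin X G" "G \<inter> A = {x}"
    using disc unfolding discrete_subspace_iff_isolated by blast
  have only_x: "y = x" if y: "y \<in> G \<inter> W x" "y \<in> B" "B \<in> C" for y B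
  proof (cases "y \<in> A")
    case False
    then have "extends_avoiding W A B"
      using chain[OF A(1) y(3)] y(2) unfolding extends_avoiding_def by blast
    then show ?thesis
      using False y A(2) unfolding extends_avoiding_def by blast
  qed (use y G in blast)
  have "x \<in> G \<inter> W x \<inter> \<Union>C"
    using G A W[OF \<open>x \<in> \<Union>C\<close>] by blast
  then have "(G \<inter> W x) \<inter> \<Union>C = {x}"
    using only_x by blast
  moreover have "openin X (G \<inter> W x)"
    using G(1) W[OF \<open>x \<in> \<Union>C\<close>] by blast
  ultimately show "\<exists>G. openin X G \<and> G \<inter> \<Union>C = {x}"
    by blast
qed

text \<open>Shapirovskii's covering lemma. Zorn's lemma is applied to end-extensions that avoid the
  W-neighbourhoods of earlier points; this is what keeps unions of chains discrete.\<close>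

lemma discrete_subspace_cover:
  assumes t1: "t1_space X" and Z: "Z \<subseteq> topspace X"
    and W: "\<And>z. z \<in> Z \<Longrightarrow> openin X (W z) \<and> z \<in> W z"
  obtains A where "A \<subseteq> Z" "discrete_subspace X A" "Z \<subseteq> X closure_of A \<union> (\<Union>a\<in>A. W a)"
proof -
  define S where "S = {A. A \<subseteq> Z \<and> discrete_subspace X A}"
  have po: "partial_order_on S (relation_of (extends_avoiding W) S)"
    by (rule partial_order_on_relation_ofI) (unfold extends_avoiding_def; blast)+
  have "\<exists>U\<in>S. \<forall>A\<in>C. extends_avoiding W A U" if C: "C \<in> Chains (relation_of (extends_avoiding W) S)" for C
  proof
    have CS: "C \<subseteq> S"
      using Chains_relation_of[OF C] .
    have chain: "extends_avoiding W A B \<or> extends_avoiding W B A" if "A \<in> C" "B \<in> C" for A B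
      using C that unfolding Chains_def relation_of_def by auto
    have "discrete_subspace X (\<Union>C)"
      using discrete_subspace_Union_chain[of C X W] CS W chain unfolding S_def by blast
    then show "\<Union>C \<in> S"
      using CS unfolding S_def by blast
    show "\<forall>A\<in>C. extends_avoiding W A (\<Union>C)"
      using chain unfolding extends_avoiding_def by blast
  qed
  then obtain M where M: "M \<in> S" and max: "\<And>A. A \<in> S \<Longrightarrow> extends_avoiding W M A \<Longrightarrow> A = M"
    using predicate_Zorn[OF po] by metis
  have "z \<in> X closure_of M \<union> (\<Union>a\<in>M. W a)" if z: "z \<in> Z" for z
  proof (rule ccontr)
    assume nz: "z \<notin> X closure_of M \<union> (\<Union>a\<in>M. W a)"
    have "insert z M \<in> S"
      using M z Z nz discrete_subspace_insert[OF t1, of M z] unfolding S_def by blast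
    moreover have "extends_avoiding W M (insert z M)"
      using nz unfolding extends_avoiding_def by blast
    ultimately have "insert z M = M"
      by (rule max)
    moreover have "z \<notin> M"
      using nz z Z closure_of_subset_Int[of X M] by blast
    ultimately show False
      by blast
  qed
  then show thesis
    using that[of M] M unfolding S_def by blast
qed

definition hausdorff_inseparable :: "'a topology \<Rightarrow> 'a \<Rightarrow> 'a set" where
  "hausdorff_inseparable X p =
     {y \<in> topspace X. \<forall>U V. openin X U \<and> y \<in> U \<and> openin X V \<and> p \<in> V \<longrightarrow> U \<inter> V \<noteq> {}}"

lemma finitely_non_urysohn_hausdorff_inseparable:
  assumes p: "p \<in> topspace X"
  shows "finitely_non_urysohn X (hausdorff_inseparable X p)"
  unfolding finitely_non_urysohn_def
proof (intro conjI allI impI)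
  show "hausdorff_inseparable X p \<noteq> {}" "hausdorff_inseparable X p \<subseteq> topspace X"
    using p unfolding hausdorff_inseparable_def by auto
  fix F U
  assume F: "finite F \<and> F \<noteq> {} \<and> F \<subseteq> hausdorff_inseparable X p \<and> (\<forall>x\<in>F. openin X (U x) \<and> x \<in> U x)"
  have "p \<in> X closure_of (U x)" if x: "x \<in> F" for x
    unfolding in_closure_of
  proof (intro conjI allI impI p)
    fix V assume "p \<in> V \<and> openin X V"
    then have "U x \<inter> V \<noteq> {}"
      using F x unfolding hausdorff_inseparable_def by blast
    then show "\<exists>y. y \<in> U x \<and> y \<in> V" by blast
  qed
  then show "(\<Inter>x\<in>F. X closure_of (U x)) \<noteq> {}" by blast
qed

lemma closure_avoids_point_if_not_hausdorff_inseparable: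
  assumes "z \<in> topspace X - hausdorff_inseparable X p"
  obtains U where "openin X U" "z \<in> U" "p \<notin> X closure_of U"
proof -
  obtain U V where "openin X U" "z \<in> U" "openin X V" "p \<in> V" "U \<inter> V = {}"
    using assms unfolding hausdorff_inseparable_def by blast
  then show thesis
    using that unfolding in_closure_of by blast
qed

text \<open>A point y \<noteq> p outside H lies in some W a or in the closure of A; in the second case
  y is in the closure of W y \<inter> A, which misses p.\<close>

lemma Inter_separating_family_eq_singleton:
  assumes p: "p \<in> topspace X"
    and W: "\<And>z. z \<in> topspace X - H \<Longrightarrow> openin X (W z) \<and> z \<in> W z \<and> p \<notin> X closure_of (W z)"
    and A: "A \<subseteq> topspace X - H"
    and cover: "topspace X - H \<subseteq> X closure_of A \<union> (\<Union>a\<in>A. W a)"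
  shows "topspace X \<inter> \<Inter>((\<lambda>h. topspace X - {h}) ` (H - {p})
           \<union> ((\<lambda>a. topspace X - X closure_of (W a)) ` A
             \<union> (\<lambda>S. topspace X - X closure_of S) ` {S. S \<subseteq> A \<and> p \<notin> X closure_of S})) = {p}"
    (is "topspace X \<inter> \<Inter>?\<U> = {p}")
proof
  have "p \<in> U" if "U \<in> ?\<U>" for U
    using that
  proof (elim UnE imageE)
    fix a assume "a \<in> A" "U = topspace X - X closure_of (W a)"
    then show "p \<in> U"
      using p A W[of a] by blast
  qed (use p in auto)
  then show "{p} \<subseteq> topspace X \<inter> \<Inter>?\<U>"
    using p by blast
  show "topspace X \<inter> \<Inter>?\<U> \<subseteq> {p}"
  proof
    fix y assume y: "y \<in> topspace X \<inter> \<Inter>?\<U>"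
    then have mem: "y \<in> U" if "U \<in> ?\<U>" for U
      using that by blast
    show "y \<in> {p}"
    proof (rule ccontr)
      assume "y \<notin> {p}"
      then have "y \<notin> H"
        using mem[of "topspace X - {y}"] by blast
      then have yZ: "y \<in> topspace X - H"
        using y by blast
      then consider a where "a \<in> A" "y \<in> W a" | "y \<in> X closure_of A"
        using cover by blast
      then show False
      proof cases
        case 1
        then have "y \<in> X closure_of (W a)"
          using A W[of a] closure_of_subset[OF openin_subset] by blast
        then show False
          using 1 mem[of "topspace X - X closure_of (W a)"] by blast
      next
        case 2
        have Wy: "openin X (W y)" "y \<in> W y" "p \<notin> X closure_of (W y)"
          using W yZ by auto
        have "y \<in> X closure_of (W y \<inter> A)"
          using openin_Int_closure_of_subset[OF Wy(1), of A] Wy(2) 2 by blast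
        moreover have "p \<notin> X closure_of (W y \<inter> A)"
          using Wy(3) closure_of_mono[of "W y \<inter> A" "W y" X] by blast
        ultimately show False
          using mem[of "topspace X - X closure_of (W y \<inter> A)"] by blast
      qed
    qed
  qed
qed

lemma card_of_Un3_ordLeq_csum:
  assumes "|U1| \<le>o |A1|" "|U2| \<le>o |A2|" "|U3| \<le>o |A3|"
  shows "|U1 \<union> (U2 \<union> U3)| \<le>o |A1| +c |A2| +c |A3|"
proof -
  have "|U2 \<union> U3| \<le>o |A2| +c |A3|"
    using Un_csum csum_mono[OF assms(2,3)] by (rule ordLeq_transitive)
  then show ?thesis
    using Un_csum csum_mono[OF assms(1)] by (blast intro: ordLeq_transitive)
qed

lemma pseudocharacter_family:
  assumes t1: "t1_space X" and p: "p \<in> topspace X"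
  obtains H A \<U> where "finitely_non_urysohn X H" "discrete_subspace X A"
    "\<forall>U\<in>\<U>. openin X U" "topspace X \<inter> \<Inter>\<U> = {p}" "|\<U>| \<le>o |H| +c |A| +c |Pow A|"
proof -
  define H where "H = hausdorff_inseparable X p"
  obtain W where W: "\<And>z. z \<in> topspace X - H \<Longrightarrow> openin X (W z) \<and> z \<in> W z \<and> p \<notin> X closure_of (W z)"
    using closure_avoids_point_if_not_hausdorff_inseparable unfolding H_def by metis
  obtain A where A: "A \<subseteq> topspace X - H" "discrete_subspace X A"
    and cover: "topspace X - H \<subseteq> X closure_of A \<union> (\<Union>a\<in>A. W a)"
    using discrete_subspace_cover[OF t1, of "topspace X - H" W] W by blast
  define \<U> where "\<U> = (\<lambda>h. topspace X - {h}) ` (H - {p})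
    \<union> ((\<lambda>a. topspace X - X closure_of (W a)) ` A
      \<union> (\<lambda>S. topspace X - X closure_of S) ` {S. S \<subseteq> A \<and> p \<notin> X closure_of S})"
  have "\<forall>U\<in>\<U>. openin X U"
    using t1 unfolding \<U>_def H_def hausdorff_inseparable_def t1_space_closedin_singleton
    by (auto intro: openin_diff)
  moreover have "|\<U>| \<le>o |H| +c |A| +c |Pow A|"
    unfolding \<U>_def
    by (intro card_of_Un3_ordLeq_csum card_of_image[THEN ordLeq_transitive] card_of_mono1) auto
  ultimately show thesis
    using that[of H A \<U>] A(2) Inter_separating_family_eq_singleton[OF p W A(1) cover]
      finitely_non_urysohn_hausdorff_inseparable[OF p]
    unfolding H_def \<U>_def by blast
qed

lemma card_of_Pow_ordLeq_cexp_ctwo: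
  assumes A: "|A| \<le>o \<kappa>" and \<kappa>: "Card_order \<kappa>"
  shows "|Pow A| \<le>o ctwo ^c \<kappa>"
proof -
  have "|A| \<le>o |Field \<kappa>|"
    using ordLeq_ordIso_trans[OF A ordIso_symmetric[OF card_of_Field_ordIso[OF \<kappa>]]] .
  then obtain f where f: "inj_on f A" "f ` A \<subseteq> Field \<kappa>"
    unfolding card_of_ordLeq[symmetric] by blast
  have "inj_on (image f) (Pow A)" "image f ` Pow A \<subseteq> Pow (Field \<kappa>)"
    using inj_on_image_Pow[OF f(1)] f(2) by blast+
  then have "|Pow A| \<le>o |Pow (Field \<kappa>)|"
    unfolding card_of_ordLeq[symmetric] by blast
  moreover have "|Pow (Field \<kappa>)| =o ctwo ^c \<kappa>"
    unfolding cexp_def ctwo_def Field_card_of by (rule card_of_Pow_Func)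
  ultimately show ?thesis
    by (rule ordLeq_ordIso_trans)
qed

lemma card_of_ordLeq_if_nu_le:
  assumes "nu_le X \<nu>" and "finitely_non_urysohn X A"
  shows "|A| \<le>o \<nu>"
proof -
  have "cone +c |A| \<le>o \<nu>"
    using assms unfolding nu_le_def by blast
  then show ?thesis
    by (rule ordLeq_transitive[OF ordLeq_csum2[OF card_of_Card_order]])
qed

theorem corollary3p10:
  fixes X :: "'a topology" and \<nu> :: "'b rel" and \<sigma> :: "'c rel"
  assumes "t1_space X" and "infinite (topspace X)"
    and "Card_order \<nu>" and "Card_order \<sigma>"
    and "nu_le X \<nu>" and "spread_le X \<sigma>"
  shows "psi_le X (BNF_Cardinal_Arithmetic.cprod \<nu> (BNF_Cardinal_Arithmetic.cexp BNF_Cardinal_Arithmetic.ctwo \<sigma>))"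
proof -
  have \<sigma>: "natLeq \<le>o \<sigma>" "\<And>D. discrete_subspace X D \<Longrightarrow> |D| \<le>o \<sigma>"
    using assms(6) unfolding spread_le_def by auto
  define T where "T = ctwo ^c \<sigma>"
  have "Cinfinite \<sigma>"
    using cinfinite_mono[OF \<sigma>(1) natLeq_cinfinite] assms(4) by simp
  have T: "Cinfinite T" "\<sigma> \<le>o T"
    unfolding T_def using ordLeq_refl[OF Card_order_ctwo]
    by (rule Cinfinite_cexp[OF _ \<open>Cinfinite \<sigma>\<close>], rule ordLeq_cexp2[OF _ assms(4)])
  obtain p0 where "p0 \<in> topspace X"
    using assms(2) by fastforce
  then obtain H0 where H0: "finitely_non_urysohn X H0"
    using pseudocharacter_family[OF assms(1)] by blast
  then have "H0 \<noteq> {}"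
    unfolding finitely_non_urysohn_def by blast
  then have "Cnotzero |H0|"
    using card_of_ordIso_czero_iff_empty[of H0] card_of_Card_order[of H0] by simp
  then have \<nu>: "Cnotzero \<nu>"
    by (rule Cnotzero_mono[OF _ assms(3) card_of_ordLeq_if_nu_le[OF assms(5) H0]])
  have K: "Cinfinite (\<nu> *c T)" "\<nu> \<le>o \<nu> *c T" "T \<le>o \<nu> *c T"
    using Cinfinite_cprod2[OF \<nu> T(1)] ordLeq_cprod2[OF \<nu>] T(1)
      ordLeq_ordIso_trans[OF ordLeq_cprod2[OF Cinfinite_Cnotzero[OF T(1)] assms(3)] cprod_com]
    by auto
  show ?thesis
    unfolding psi_le_def T_def[symmetric]
  proof (intro conjI ballI)
    show "natLeq \<le>o \<nu> *c T"
      using ordLeq_transitive[OF \<sigma>(1) ordLeq_transitive[OF T(2) K(3)]] .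
    fix p assume "p \<in> topspace X"
    then obtain H A \<U> where HA: "finitely_non_urysohn X H" "discrete_subspace X A"
      and \<U>: "\<forall>U\<in>\<U>. openin X U" "topspace X \<inter> \<Inter>\<U> = {p}" "|\<U>| \<le>o |H| +c |A| +c |Pow A|"
      using pseudocharacter_family[OF assms(1)] by blast
    have A: "|A| \<le>o \<sigma>"
      using \<sigma>(2)[OF HA(2)] .
    have "|H| \<le>o \<nu> *c T"
      using ordLeq_transitive[OF card_of_ordLeq_if_nu_le[OF assms(5) HA(1)] K(2)] .
    moreover have "|A| \<le>o \<nu> *c T"
      using ordLeq_transitive[OF A ordLeq_transitive[OF T(2) K(3)]] .
    moreover have "|Pow A| \<le>o \<nu> *c T"
      using card_of_Pow_ordLeq_cexp_ctwo[OF A assms(4)] K(3) unfolding T_def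
      by (rule ordLeq_transitive)
    ultimately have "|H| +c |A| +c |Pow A| \<le>o \<nu> *c T"
      using K(1) by (simp add: csum_cinfinite_bound card_of_Card_order Card_order_csum)
    then show "\<exists>\<U>. (\<forall>U\<in>\<U>. openin X U) \<and> topspace X \<inter> \<Inter>\<U> = {p} \<and> |\<U>| \<le>o \<nu> *c T"
      using \<U>(1,2) ordLeq_transitive[OF \<U>(3)] by blast
  qed
qed

end
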